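(* Let $N=2^n$, let $\{|\lambda_j\rangle\}_{j=0}^{N-1}$ be an orthonormal basis and $\mathcal{Q}$ a unitary with $U_{\omega_\lambda}=\mathcal{Q}^\dagger U_\omega\mathcal{Q}$, such that implementing $\mathcal{Q}$ requires $\mathcal{O}(\chi)$ 1- and 2-qubit gates. Let $\mathcal{A}=P(U_{\omega_\lambda})=\sum_{k=0}^{d}\alpha_kU_{\omega_\lambda}^k$ with $\deg P=d$ and $|P(x)|^2\le c$ for all $x\in\mathbb{T}$. Then $\mathcal{A}/\sqrt{c}$ can be implemented (as the top-left block, with respect to one ancilla qubit, of a unitary circuit) using $\mathcal{O}(d\log N+\chi)$ 1- and 2-qubit gates.
   Context: $\mathbb{T}=\{x\in\mathbb{C}:|x|=1\}$, $\omega_N=e^{2\pi i/N}$, $U_\omega=\sum_{j=0}^{N-1}\omega_N^j|j\rangle\langle j|$ in the computational basis, and $U_{\omega_\lambda}=\sum_{j=0}^{N-1}\omega_N^j|\lambda_j\rangle\langle\lambda_j|$. Gates are arbitrary 1- and 2-qubit unitaries. *)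

theory Defs
  imports Complex_Main "Jordan_Normal_Form.Matrix"
begin

(* Conventions: an n-qubit register is C^(2^n); basis index r encodes qubit q in bit q of r. *)

definition qbit :: "nat \<Rightarrow> nat \<Rightarrow> nat" where
  "qbit r q = (r div 2 ^ q) mod 2"

definition loc_index :: "nat list \<Rightarrow> nat \<Rightarrow> nat" where
  "loc_index qs r = (\<Sum>t<length qs. qbit r (qs ! t) * 2 ^ t)"

definition adj :: "complex mat \<Rightarrow> complex mat" where
  "adj M = mat (dim_col M) (dim_row M) (\<lambda>(i, j). cnj (M $$ (j, i)))"

definition is_unitary :: "nat \<Rightarrow> complex mat \<Rightarrow> bool" where
  "is_unitary m U \<longleftrightarrow> U \<in> carrier_mat m m \<and> adj U * U = 1\<^sub>m m \<and> U * adj U = 1\<^sub>m m"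

(* a gate: ordered list of the qubits it acts on, and a unitary on those qubits *)
type_synonym gate = "nat list \<times> complex mat"

definition valid_gate :: "nat \<Rightarrow> gate \<Rightarrow> bool" where
  "valid_gate n g \<longleftrightarrow> (let (qs, G) = g in
      distinct qs \<and> (length qs = 1 \<or> length qs = 2) \<and> set qs \<subseteq> {..<n}
      \<and> is_unitary (2 ^ length qs) G)"

definition embed_gate :: "nat \<Rightarrow> gate \<Rightarrow> complex mat" where
  "embed_gate n g = (let (qs, G) = g in
     mat (2 ^ n) (2 ^ n) (\<lambda>(r, s).
       if (\<forall>q<n. q \<notin> set qs \<longrightarrow> qbit r q = qbit s q)
       then G $$ (loc_index qs r, loc_index qs s) else 0))"

definition circuit_mat :: "nat \<Rightarrow> gate list \<Rightarrow> complex mat" where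
  "circuit_mat n gs = foldr (\<lambda>g M. embed_gate n g * M) gs (1\<^sub>m (2 ^ n))"

definition implements :: "nat \<Rightarrow> gate list \<Rightarrow> complex mat \<Rightarrow> bool" where
  "implements n gs U \<longleftrightarrow> (\<forall>g\<in>set gs. valid_gate n g) \<and> circuit_mat n gs = U"

definition omega :: "nat \<Rightarrow> complex" where
  "omega N = cis (2 * pi / real N)"

definition U_omega :: "nat \<Rightarrow> complex mat" where
  "U_omega N = mat N N (\<lambda>(r, s). if r = s then omega N ^ r else 0)"

definition U_omega_lambda :: "nat \<Rightarrow> (nat \<Rightarrow> complex vec) \<Rightarrow> complex mat" where
  "U_omega_lambda N lam = mat N N (\<lambda>(r, s). \<Sum>j<N. omega N ^ j * (lam j $ r) * cnj (lam j $ s))"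

definition orthonormal_basis :: "nat \<Rightarrow> (nat \<Rightarrow> complex vec) \<Rightarrow> bool" where
  "orthonormal_basis N lam \<longleftrightarrow> (\<forall>j<N. lam j \<in> carrier_vec N) \<and>
     (\<forall>j<N. \<forall>k<N. (\<Sum>i<N. cnj (lam j $ i) * lam k $ i) = (if j = k then 1 else 0))"

definition mat_poly :: "nat \<Rightarrow> (nat \<Rightarrow> complex) \<Rightarrow> nat \<Rightarrow> complex mat \<Rightarrow> complex mat" where
  "mat_poly N alpha d U = foldr (\<lambda>k M. alpha k \<cdot>\<^sub>m (U ^\<^sub>m k) + M) [0..<Suc d] (0\<^sub>m N N)"

(* V (on n+1 qubits, ancilla = qubit n) has the 2^n x 2^n matrix B as top-left block,
   i.e. (<0|_anc (x) I) V (|0>_anc (x) I) = B *)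
definition top_left_block :: "nat \<Rightarrow> complex mat \<Rightarrow> complex mat \<Rightarrow> bool" where
  "top_left_block n V B \<longleftrightarrow> (\<forall>i<2 ^ n. \<forall>j<2 ^ n. V $$ (i, j) = B $$ (i, j))"

end

theory Submission
  imports Defs "HOL-Computational_Algebra.Fundamental_Theorem_Algebra"
begin

text \<open>Since \<open>U\<^sub>\<omega>\<^sub>\<lambda> = Q\<^sup>\<dagger> U\<^sub>\<omega> Q\<close> with \<open>U\<^sub>\<omega> = diag(\<omega>\<^sup>j)\<close>,
  the matrix \<open>P(U\<^sub>\<omega>\<^sub>\<lambda>) / \<surd>c\<close> equals \<open>Q\<^sup>\<dagger> diag(p(\<omega>\<^sup>j)) Q\<close> for \<open>p = P / \<surd>c\<close>,
  and \<open>|p| \<le> 1\<close> on the unit circle. The Fejer--Riesz theorem, applied to \<open>1 - |p|\<^sup>2 \<ge> 0\<close>,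
  gives a polynomial \<open>q\<close> of degree \<open>\<le> d\<close> with \<open>|p|\<^sup>2 + |q|\<^sup>2 = 1\<close> on the circle.
  Quantum signal processing then writes \<open>(p(x), q(x))\<close> as the first column of
  \<open>R\<^sub>0 \<Phi>(x) R\<^sub>1 \<dots> \<Phi>(x) R\<^sub>d\<close> with unitary \<open>2 \<times> 2\<close> rotations \<open>R\<^sub>i\<close> and
  \<open>\<Phi>(x) = diag(1, x)\<close>: peeling off one rotation lowers the degree, because the lowest and
  the highest coefficient vectors of \<open>(p, q)\<close> are orthogonal. On an ancilla controlled by the
  register state \<open>j\<close>, \<open>\<Phi>(\<omega>\<^sup>j)\<close> costs one controlled phase per qubit, so the sequence
  takes \<open>(d + 1) + d n\<close> gates; conjugating by the circuit for \<open>Q\<close> adds \<open>2 \<chi>\<close> of them,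
  up to the factor \<open>K\<close>.\<close>

section \<open>Polynomials on the unit circle\<close>

text \<open>The Cayley transform maps the real line smoothly and injectively into the unit circle,
  with \<open>0 \<mapsto> 1\<close>; it provides the paths along which we take limits and derivatives on the circle.\<close>

definition cayley :: "complex \<Rightarrow> complex" where
  "cayley w = (1 + \<i> * w) / (1 - \<i> * w)"

lemma cayley_denom_nonzero: "1 - \<i> * complex_of_real t \<noteq> 0"
  by (simp add: complex_eq_iff)

lemma cayley_0: "cayley 0 = 1"
  by (simp add: cayley_def)

lemma norm_cayley_of_real: "cmod (cayley (of_real t)) = 1"
proof -
  have "1 + \<i> * complex_of_real t = cnj (1 - \<i> * complex_of_real t)" by simp
  then have "cmod (1 + \<i> * complex_of_real t) = cmod (1 - \<i> * complex_of_real t)"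
    by (metis complex_mod_cnj)
  then show ?thesis unfolding cayley_def using cayley_denom_nonzero[of t] by (simp add: norm_divide)
qed

lemma inj_cayley_of_real: "inj (\<lambda>t::real. cayley (of_real t))"
proof (rule injI)
  fix s t :: real assume "cayley (of_real s) = cayley (of_real t)"
  then have "(1 + \<i> * of_real s) * (1 - \<i> * of_real t) = (1 + \<i> * of_real t) * (1 - \<i> * of_real s)"
    unfolding cayley_def using cayley_denom_nonzero[of s] cayley_denom_nonzero[of t]
    by (simp add: divide_eq_eq field_simps)
  then have "2 * \<i> * (complex_of_real s - of_real t) = 0" by (simp add: algebra_simps)
  then show "s = t" by simp
qed

lemma cayley_of_real_neq_1: "t \<noteq> 0 \<Longrightarrow> cayley (of_real t) \<noteq> 1"
  using inj_cayley_of_real cayley_0 by (metis injD of_real_0)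

lemma cayley_has_field_derivative_0: "(cayley has_field_derivative 2 * \<i>) (at 0)"
proof -
  have "((\<lambda>w. (1 + \<i> * w) / (1 - \<i> * w)) has_field_derivative
        (\<i> * (1 - \<i> * 0) - (1 + \<i> * 0) * (- \<i>)) / ((1 - \<i> * 0) * (1 - \<i> * 0))) (at 0)"
    by (rule DERIV_divide) (auto intro!: derivative_eq_intros)
  then show ?thesis unfolding cayley_def[abs_def] by simp
qed

lemma infinite_unit_circle: "infinite {x::complex. cmod x = 1}"
proof
  assume "finite {x::complex. cmod x = 1}"
  moreover have "range (\<lambda>t::real. cayley (of_real t)) \<subseteq> {x. cmod x = 1}"
    using norm_cayley_of_real by auto
  ultimately have "finite (range (\<lambda>t::real. cayley (of_real t)))" by (rule finite_subset[rotated])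
  then have "finite (UNIV :: real set)"
    using finite_imageD inj_cayley_of_real by (metis inj_on_subset subset_UNIV)
  then show False using infinite_UNIV_char_0 by blast
qed

lemma poly_eqI_unit_circle:
  fixes p q :: "complex poly"
  assumes "\<And>x. cmod x = 1 \<Longrightarrow> poly p x = poly q x"
  shows "p = q"
proof (rule ccontr)
  assume "p \<noteq> q"
  then have "finite {x. poly (p - q) x = 0}" by (intro poly_roots_finite) simp
  moreover have "{x::complex. cmod x = 1} \<subseteq> {x. poly (p - q) x = 0}" using assms by auto
  ultimately show False using infinite_unit_circle finite_subset by blast
qed

lemma unit_circle_mult_cnj: "cmod x = 1 \<Longrightarrow> x * cnj x = 1"
  using complex_norm_square[of x] by simp

lemma unit_circle_inverse_cnj: "cmod x = 1 \<Longrightarrow> 1 / cnj x = x"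
  using unit_circle_mult_cnj[of x] by (metis divide_eq_eq mult.commute mult_zero_left zero_neq_one)

lemma poly_eq_sum_atMost:
  fixes p :: "'a::comm_semiring_1 poly"
  assumes "degree p \<le> n"
  shows "poly p x = (\<Sum>k\<le>n. coeff p k * x ^ k)"
proof -
  have "poly p x = (\<Sum>k\<le>degree p. coeff p k * x ^ k)" by (rule poly_altdef)
  also have "\<dots> = (\<Sum>k\<le>n. coeff p k * x ^ k)"
    by (rule sum.mono_neutral_left) (use assms in \<open>auto intro: le_degree\<close>)
  finally show ?thesis .
qed

lemma coeff_mult_degree_le_sum:
  fixes a b :: "'a::comm_semiring_1 poly"
  assumes "degree a \<le> m" "degree b \<le> n"
  shows "coeff (a * b) (m + n) = coeff a m * coeff b n"
proof -
  have "coeff (a * b) (m + n) = (\<Sum>i\<le>m + n. coeff a i * coeff b (m + n - i))" by (rule coeff_mult)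
  also have "\<dots> = (\<Sum>i\<in>{m}. coeff a i * coeff b (m + n - i))"
  proof (rule sum.mono_neutral_right)
    show "\<forall>i\<in>{..m + n} - {m}. coeff a i * coeff b (m + n - i) = 0"
    proof
      fix i assume "i \<in> {..m + n} - {m}"
      then have "i < m \<or> i > m" by auto
      then show "coeff a i * coeff b (m + n - i) = 0"
        using assms by (auto simp: coeff_eq_0)
    qed
  qed auto
  finally show ?thesis by simp
qed

lemma degree_le_of_coeff_Suc_eq_0:
  assumes "degree p \<le> Suc n" "coeff p (Suc n) = 0"
  shows "degree p \<le> n"
proof (rule ccontr)
  assume "\<not> degree p \<le> n"
  then have deg: "degree p = Suc n" using assms(1) by simp
  then have "p = 0" using assms(2) by (metis leading_coeff_0_iff)
  then show False using deg by simp
qed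

definition cnj_reflect :: "nat \<Rightarrow> complex poly \<Rightarrow> complex poly" where
  "cnj_reflect n p = (\<Sum>k\<le>n. monom (cnj (coeff p k)) (n - k))"

lemma degree_cnj_reflect_le: "degree (cnj_reflect n p) \<le> n"
  unfolding cnj_reflect_def by (rule degree_sum_le) (auto intro: order.trans[OF degree_monom_le])

lemma coeff_cnj_reflect: "k \<le> n \<Longrightarrow> coeff (cnj_reflect n p) k = cnj (coeff p (n - k))"
proof -
  assume k: "k \<le> n"
  have "coeff (cnj_reflect n p) k = (\<Sum>j\<le>n. if n - j = k then cnj (coeff p j) else 0)"
    unfolding cnj_reflect_def by (simp add: coeff_sum coeff_monom)
  also have "\<dots> = (\<Sum>j\<in>{n - k}. cnj (coeff p j))"
    by (rule sum.mono_neutral_cong_right) (use k in auto)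
  finally show ?thesis by simp
qed

lemma poly_cnj_reflect_nonzero:
  assumes "degree p \<le> n" "x \<noteq> 0"
  shows "poly (cnj_reflect n p) x = x ^ n * cnj (poly p (1 / cnj x))"
proof -
  have "poly (cnj_reflect n p) x = (\<Sum>k\<le>n. cnj (coeff p k) * x ^ (n - k))"
    unfolding cnj_reflect_def by (simp add: poly_sum poly_monom)
  also have "\<dots> = (\<Sum>k\<le>n. x ^ n * (cnj (coeff p k) * (1 / x) ^ k))"
    by (rule sum.cong) (use assms in \<open>auto simp: power_diff power_divide\<close>)
  also have "\<dots> = x ^ n * cnj (\<Sum>k\<le>n. coeff p k * (1 / cnj x) ^ k)"
    by (simp add: sum_distrib_left)
  also have "\<dots> = x ^ n * cnj (poly p (1 / cnj x))"
    using poly_eq_sum_atMost[OF assms(1)] by simp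
  finally show ?thesis .
qed

lemma poly_cnj_reflect:
  assumes "degree p \<le> n" "cmod x = 1"
  shows "poly (cnj_reflect n p) x = x ^ n * cnj (poly p x)"
proof -
  have "x \<noteq> 0" using assms(2) by auto
  then show ?thesis using poly_cnj_reflect_nonzero[OF assms(1)] unit_circle_inverse_cnj[OF assms(2)] by simp
qed

lemma cnj_reflect_mult:
  assumes "degree a \<le> m" "degree b \<le> n"
  shows "cnj_reflect (m + n) (a * b) = cnj_reflect m a * cnj_reflect n b"
proof (rule poly_eqI_unit_circle)
  fix x :: complex assume x: "cmod x = 1"
  have "degree (a * b) \<le> m + n" using assms degree_mult_le[of a b] by simp
  then show "poly (cnj_reflect (m + n) (a * b)) x = poly (cnj_reflect m a * cnj_reflect n b) x"
    using x assms by (simp add: poly_cnj_reflect power_add)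
qed

lemma cnj_reflect_Suc: "degree p \<le> n \<Longrightarrow> cnj_reflect (Suc n) p = pCons 0 (cnj_reflect n p)"
  by (rule poly_eqI_unit_circle) (simp add: poly_cnj_reflect)

lemma cnj_reflect_0_const: "cnj_reflect 0 [:c:] = [:cnj c:]"
  unfolding cnj_reflect_def by (simp add: monom_0)

lemma cnj_reflect_linear:
  assumes "z \<noteq> 0"
  shows "cnj_reflect 1 [:- z, 1:] = smult (- cnj z) [:- (1 / cnj z), 1:]"
  using assms by (simp add: cnj_reflect_def monom_altdef numeral_2_eq_2 atMost_Suc)

section \<open>The Fejer--Riesz factorization\<close>

text \<open>For \<open>degree T \<le> 2 d\<close>: the Laurent polynomial \<open>x\<^sup>-\<^sup>d T(x)\<close> is a nonnegative real on the
  unit circle (in the complex order, \<open>0 \<le> w\<close> means that \<open>w\<close> is a nonnegative real).\<close>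

definition circle_nonneg :: "nat \<Rightarrow> complex poly \<Rightarrow> bool" where
  "circle_nonneg d T \<longleftrightarrow> (\<forall>x. cmod x = 1 \<longrightarrow> 0 \<le> poly T x / x ^ d)"

lemma circle_nonneg_self_reciprocal:
  assumes "degree T \<le> 2 * d" "circle_nonneg d T"
  shows "cnj_reflect (2 * d) T = T"
proof (rule poly_eqI_unit_circle)
  fix x :: complex assume x: "cmod x = 1"
  define w where "w = poly T x / x ^ d"
  have "0 \<le> w" using assms(2) x unfolding circle_nonneg_def w_def by auto
  then have cw: "cnj w = w" by (simp add: less_eq_complex_def complex_eq_iff)
  have Tx: "poly T x = x ^ d * w" using x unfolding w_def by auto
  have "poly (cnj_reflect (2 * d) T) x = x ^ (2 * d) * cnj (poly T x)"
    by (rule poly_cnj_reflect[OF assms(1) x])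
  also have "\<dots> = x ^ d * w * (x * cnj x) ^ d"
    unfolding Tx using cw by (simp add: power_mult_distrib mult_2 power_add)
  also have "\<dots> = poly T x" using unit_circle_mult_cnj[OF x] Tx by simp
  finally show "poly (cnj_reflect (2 * d) T) x = poly T x" .
qed

lemma closed_complex_nonneg: "closed {w::complex. 0 \<le> w}"
proof -
  have "{w::complex. 0 \<le> w} = {w. Im w = 0} \<inter> {w. 0 \<le> Re w}"
    by (auto simp: less_eq_complex_def)
  moreover have "closed {w::complex. Im w = 0}"
    by (rule closed_Collect_eq) (auto intro: continuous_intros)
  moreover have "closed {w::complex. 0 \<le> Re w}"
    by (rule closed_Collect_le) (auto intro: continuous_intros)
  ultimately show ?thesis by auto
qed

lemma complex_nonneg_of_real_mult_iff:
  "c > 0 \<Longrightarrow> 0 \<le> complex_of_real c * u \<longleftrightarrow> 0 \<le> u"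
  by (simp add: less_eq_complex_def zero_le_mult_iff)

lemma circle_nonneg_of_punctured:
  assumes z: "cmod z = 1"
    and nonneg: "\<And>x. cmod x = 1 \<Longrightarrow> x \<noteq> z \<Longrightarrow> 0 \<le> poly S x / x ^ e"
  shows "circle_nonneg e S"
  unfolding circle_nonneg_def
proof (intro allI impI)
  fix x :: complex assume x: "cmod x = 1"
  show "0 \<le> poly S x / x ^ e"
  proof (cases "x = z")
    case True
    define g where "g t = poly S (z * cayley (of_real t)) / (z * cayley (of_real t)) ^ e" for t :: real
    have cont: "isCont (\<lambda>t. z * cayley (of_real t)) 0"
      unfolding cayley_def using cayley_denom_nonzero[of 0] by (auto intro!: continuous_intros)
    have "z \<noteq> 0" using z by auto
    then have "isCont g 0"
      unfolding g_def by (auto intro!: continuous_intros isCont_o2[OF cont] simp: cayley_0)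
    then have "(g \<longlongrightarrow> g 0) (at 0)" by (simp add: isCont_def)
    moreover have "\<forall>\<^sub>F t in at (0::real). g t \<in> {w. 0 \<le> w}"
    proof -
      have "g t \<in> {w. 0 \<le> w}" if "t \<noteq> 0" for t
      proof -
        have "z * cayley (of_real t) \<noteq> z" using cayley_of_real_neq_1[OF that] z by auto
        moreover have "cmod (z * cayley (of_real t)) = 1"
          using z norm_cayley_of_real[of t] by (simp add: norm_mult)
        ultimately show ?thesis using nonneg unfolding g_def by auto
      qed
      then show ?thesis by (auto simp: eventually_at_filter)
    qed
    ultimately have "g 0 \<in> {w. 0 \<le> w}"
      using Lim_in_closed_set[OF closed_complex_nonneg] by (metis at_neq_bot)
    then show ?thesis unfolding g_def True by (simp add: cayley_0)
  qed (use nonneg x in blast)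
qed

lemma has_vector_derivative_nonneg_zero:
  fixes H :: "real \<Rightarrow> complex"
  assumes dH: "(H has_vector_derivative D) (at 0)" and "\<And>t. 0 \<le> H t" and "H 0 = 0"
  shows "D = 0"
proof -
  have "Re D = 0"
  proof (rule DERIV_local_min[of "\<lambda>t. Re (H t)" "Re D" 0 1])
    show "((\<lambda>t. Re (H t)) has_real_derivative Re D) (at 0)"
      using has_field_derivative_Re[OF dH] .
    show "\<forall>y. \<bar>0 - y\<bar> < 1 \<longrightarrow> Re (H 0) \<le> Re (H y)"
      using assms(2,3) by (simp add: less_eq_complex_def)
  qed simp
  moreover have "Im D = 0"
  proof -
    have "((\<lambda>t. Im (H t)) has_real_derivative Im D) (at 0)"
      using dH has_vector_derivative_complex_iff by blast
    moreover have "(\<lambda>t. Im (H t)) = (\<lambda>t. 0)"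
      using assms(2) by (auto simp: less_eq_complex_def)
    ultimately show ?thesis using DERIV_unique DERIV_const by metis
  qed
  ultimately show ?thesis by (simp add: complex_eq_iff)
qed

text \<open>Along the path \<open>t \<mapsto> z \<cdot> cayley t\<close> through a root \<open>z\<close>, the nonnegative function
  \<open>x\<^sup>-\<^sup>d T(x)\<close> has a minimum at \<open>t = 0\<close> and is real, so its derivative \<open>2 \<i> z T'(z) / z\<^sup>d\<close>
  vanishes.\<close>

lemma circle_nonneg_root_pderiv:
  assumes nonneg: "circle_nonneg d T" and z: "cmod z = 1" and root: "poly T z = 0"
  shows "poly (pderiv T) z = 0"
proof -
  have z0: "z \<noteq> 0" using z by auto
  define G where "G w = z * cayley w" for w
  have G0: "G 0 = z" by (simp add: G_def cayley_0)
  have dG: "(G has_field_derivative z * (2 * \<i>)) (at 0)"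
    unfolding G_def[abs_def] by (rule DERIV_cmult[OF cayley_has_field_derivative_0])
  have dT: "((\<lambda>w. poly T (G w)) has_field_derivative poly (pderiv T) z * (z * (2 * \<i>))) (at 0)"
    using DERIV_chain2[OF poly_DERIV dG] G0 by simp
  have dP: "((\<lambda>w. G w ^ d) has_field_derivative of_nat d * (z * (2 * \<i>) * G 0 ^ (d - Suc 0))) (at 0)"
    by (rule DERIV_power[OF dG])
  define D where "D = poly (pderiv T) z * (z * (2 * \<i>)) / z ^ d"
  have "((\<lambda>w. poly T (G w) / G w ^ d) has_field_derivative D) (at 0)"
    using DERIV_divide[OF dT dP] G0 root z0 unfolding D_def by simp
  then have "((\<lambda>t. poly T (G (of_real t)) / G (of_real t) ^ d) has_vector_derivative D) (at 0)"
    using has_vector_derivative_real_field[of "\<lambda>w. poly T (G w) / G w ^ d" D 0] by simp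
  moreover define H where "H t = poly T (G (of_real t)) / G (of_real t) ^ d" for t :: real
  ultimately have dH: "(H has_vector_derivative D) (at 0)"
    by (simp add: H_def[abs_def])
  have "cmod (G (of_real t)) = 1" for t
    using z norm_cayley_of_real[of t] by (simp add: G_def norm_mult)
  then have "0 \<le> H t" for t using nonneg unfolding circle_nonneg_def H_def by blast
  moreover have "H 0 = 0" unfolding H_def using G0 root by simp
  ultimately have "D = 0" using has_vector_derivative_nonneg_zero[OF dH] by blast
  then show ?thesis unfolding D_def using z0 by simp
qed

text \<open>The roots of a self-reciprocal polynomial come in pairs \<open>z, 1 / conj z\<close>; on the unit circle
  the pair degenerates, and a double root is needed.\<close>

lemma self_reciprocal_root_pair_dvd:
  fixes T :: "complex poly"
  assumes self_rec: "cnj_reflect m T = T" and deg: "degree T \<le> m"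
    and root: "poly T z = 0" and z0: "z \<noteq> 0"
    and double: "cmod z = 1 \<Longrightarrow> poly (pderiv T) z = 0"
  shows "[:- z, 1:] * cnj_reflect 1 [:- z, 1:] dvd T"
proof -
  define w where "w = 1 / cnj z"
  have w0: "w \<noteq> 0" using z0 unfolding w_def by simp
  obtain T2 where T2: "T = [:- z, 1:] * T2" using root poly_eq_0_iff_dvd by (metis dvdE)
  have "poly T2 w = 0"
  proof (cases "w = z")
    case True
    then have "z * cnj z = 1" unfolding w_def using z0 by (simp add: field_simps)
    then have "(cmod z)\<^sup>2 = 1" using complex_norm_square[of z] by (metis of_real_eq_1_iff)
    then have "cmod z = 1" using norm_ge_zero[of z] by (auto simp: power2_eq_1_iff)
    then show ?thesis
      using double True unfolding T2 pderiv_mult by (simp add: pderiv_pCons)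
  next
    case False
    have "poly T w = poly (cnj_reflect m T) w" using self_rec by simp
    also have "\<dots> = 0" using poly_cnj_reflect_nonzero[OF deg w0] root unfolding w_def by simp
    finally show ?thesis using False unfolding T2 by simp
  qed
  then have "[:- z, 1:] * [:- w, 1:] dvd T"
    unfolding T2 poly_eq_0_iff_dvd by (rule mult_dvd_mono[OF dvd_refl])
  moreover have "- cnj z \<noteq> 0" using z0 by simp
  ultimately show ?thesis
    by (simp only: cnj_reflect_linear[OF z0] w_def[symmetric] mult_smult_right smult_dvd_iff if_False)
qed

lemma circle_nonneg_cofactor:
  assumes "circle_nonneg (Suc e) ([:- z, 1:] * cnj_reflect 1 [:- z, 1:] * S)"
  shows "circle_nonneg e S"
proof -
  let ?r = "[:- z, 1:]"
  have nonneg_off_z: "0 \<le> poly S x / x ^ e" if x: "cmod x = 1" and xz: "x \<noteq> z" for x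
  proof -
    have "poly (cnj_reflect 1 ?r) x = x * cnj (x - z)"
      using poly_cnj_reflect[of ?r 1 x] x by simp
    then have "poly (?r * cnj_reflect 1 ?r * S) x = x * (complex_of_real ((cmod (x - z))\<^sup>2) * poly S x)"
      by (simp only: complex_norm_square poly_mult) (simp add: algebra_simps)
    then have "poly (?r * cnj_reflect 1 ?r * S) x / x ^ Suc e
        = complex_of_real ((cmod (x - z))\<^sup>2) * (poly S x / x ^ e)"
      using x by auto
    moreover have "(cmod (x - z))\<^sup>2 > 0" using xz by simp
    ultimately show ?thesis
      using assms x complex_nonneg_of_real_mult_iff unfolding circle_nonneg_def by metis
  qed
  show ?thesis
  proof (cases "cmod z = 1")
    case False
    then show ?thesis using nonneg_off_z unfolding circle_nonneg_def by auto
  qed (use circle_nonneg_of_punctured nonneg_off_z in blast)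
qed

lemma circle_nonneg_coeff_top:
  assumes "degree T \<le> 2 * d" "circle_nonneg d T"
  shows "coeff T (2 * d) = cnj (coeff T 0)"
  using coeff_cnj_reflect[of "2 * d" "2 * d" T] circle_nonneg_self_reciprocal[OF assms] by simp

lemma circle_nonneg_divide_x:
  assumes deg: "degree T \<le> 2 * Suc e" and nonneg: "circle_nonneg (Suc e) T"
    and "T \<noteq> 0" "coeff T 0 = 0"
  shows "\<exists>T'. T = pCons 0 T' \<and> degree T' \<le> 2 * e \<and> circle_nonneg e T'"
proof -
  obtain a T' where "T = pCons a T'" by (rule pCons_cases)
  with assms(4) have T: "T = pCons 0 T'" by simp
  have "degree T \<noteq> 2 * Suc e"
  proof
    assume "degree T = 2 * Suc e"
    then have "lead_coeff T = 0" using circle_nonneg_coeff_top[OF deg nonneg] assms(4) by simp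
    then show False using assms(3) by simp
  qed
  then have "degree T' \<le> 2 * e" using deg assms(3) unfolding T by (auto split: if_splits)
  moreover have "circle_nonneg e T'"
    unfolding circle_nonneg_def
  proof (intro allI impI)
    fix x :: complex assume x: "cmod x = 1"
    then have "poly T x / x ^ Suc e = poly T' x / x ^ e" unfolding T by auto
    then show "0 \<le> poly T' x / x ^ e" using nonneg x unfolding circle_nonneg_def by metis
  qed
  ultimately show ?thesis using T by blast
qed

lemma circle_nonneg_divide_root_pair:
  assumes deg: "degree T \<le> 2 * Suc e" and nonneg: "circle_nonneg (Suc e) T" and "coeff T 0 \<noteq> 0"
  shows "\<exists>z S. T = [:- z, 1:] * cnj_reflect 1 [:- z, 1:] * S \<and> degree S \<le> 2 * e \<and> circle_nonneg e S"
proof -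
  have "coeff T (2 * Suc e) \<noteq> 0" using circle_nonneg_coeff_top[OF deg nonneg] assms(3) by simp
  then have "degree T = 2 * Suc e" using le_degree deg le_antisym by blast
  then have "\<not> constant (poly T)" by (simp add: constant_degree)
  then obtain z where root: "poly T z = 0" using fundamental_theorem_of_algebra by blast
  have z0: "z \<noteq> 0" using root assms(3) poly_0_coeff_0[of T] by auto
  let ?r = "[:- z, 1:]"
  have "?r * cnj_reflect 1 ?r dvd T"
    using self_reciprocal_root_pair_dvd[OF circle_nonneg_self_reciprocal[OF deg nonneg] deg root z0]
      circle_nonneg_root_pderiv[OF nonneg _ root] by blast
  then obtain S where T: "T = ?r * cnj_reflect 1 ?r * S" by (elim dvdE)
  have "degree (cnj_reflect 1 ?r) = 1" unfolding cnj_reflect_linear[OF z0] using z0 by simp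
  then have "degree (?r * cnj_reflect 1 ?r) = 2" by (subst degree_mult_eq) auto
  then have "degree S \<le> 2 * e" using deg assms(3) unfolding T by (subst (asm) degree_mult_eq) auto
  moreover have "circle_nonneg e S" using circle_nonneg_cofactor nonneg unfolding T by blast
  ultimately show ?thesis using T by blast
qed

theorem fejer_riesz:
  "degree T \<le> 2 * d \<Longrightarrow> circle_nonneg d T \<Longrightarrow> \<exists>q. degree q \<le> d \<and> T = q * cnj_reflect d q"
proof (induction d arbitrary: T)
  case 0
  then have T: "T = [:coeff T 0:]" using degree_0_id[of T] by simp
  have "0 \<le> poly T 1 / 1 ^ 0" using "0.prems"(2) norm_one unfolding circle_nonneg_def by blast
  moreover have "poly T 1 = coeff T 0" by (subst T) simp
  ultimately have nonneg: "0 \<le> coeff T 0" by simp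
  define q where "q = [:complex_of_real (sqrt (Re (coeff T 0))):]"
  have "q * cnj_reflect 0 q = [:coeff T 0:]"
    unfolding q_def cnj_reflect_0_const using nonneg by (simp add: less_eq_complex_def complex_eq_iff)
  then show ?case using T by (intro exI[of _ q]) (simp add: q_def)
next
  case (Suc e T)
  consider "T = 0" | "T \<noteq> 0" "coeff T 0 = 0" | "coeff T 0 \<noteq> 0" by blast
  then show ?case
  proof cases
    case 1
    then show ?thesis by (intro exI[of _ 0]) simp
  next
    case 2
    then obtain T' q where "T = pCons 0 T'" "degree q \<le> e" "T' = q * cnj_reflect e q"
      using circle_nonneg_divide_x[OF Suc.prems] Suc.IH by blast
    then show ?thesis by (intro exI[of _ q]) (simp add: cnj_reflect_Suc)
  next
    case 3
    then obtain z S s where T: "T = [:- z, 1:] * cnj_reflect 1 [:- z, 1:] * S"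
      and s: "degree s \<le> e" "S = s * cnj_reflect e s"
      using circle_nonneg_divide_root_pair[OF Suc.prems] Suc.IH by blast
    have "cnj_reflect (Suc e) ([:- z, 1:] * s) = cnj_reflect 1 [:- z, 1:] * cnj_reflect e s"
      using cnj_reflect_mult[of "[:- z, 1:]" 1 s e] s(1) by simp
    then have "T = ([:- z, 1:] * s) * cnj_reflect (Suc e) ([:- z, 1:] * s)"
      unfolding T s(2) by (simp add: algebra_simps)
    moreover have "degree ([:- z, 1:] * s) \<le> Suc e" using degree_mult_le[of "[:- z, 1:]" s] s(1) by simp
    ultimately show ?thesis by blast
  qed
qed

text \<open>Apply Fejer--Riesz to \<open>x\<^sup>d (1 - |p x|\<^sup>2)\<close>, i.e. to \<open>T = x\<^sup>d - p \<cdot> cnj_reflect d p\<close>.\<close>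

lemma complementary_poly_exists:
  fixes p :: "complex poly"
  assumes dp: "degree p \<le> d" and bounded: "\<And>x. cmod x = 1 \<Longrightarrow> cmod (poly p x) \<le> 1"
  shows "\<exists>q. degree q \<le> d \<and> (\<forall>x. cmod x = 1 \<longrightarrow> (cmod (poly p x))\<^sup>2 + (cmod (poly q x))\<^sup>2 = 1)"
proof -
  define T where "T = monom 1 d - p * cnj_reflect d p"
  have "degree (p * cnj_reflect d p) \<le> 2 * d"
    using degree_mult_le[of p "cnj_reflect d p"] dp degree_cnj_reflect_le[of d p] by simp
  moreover have "degree (monom (1::complex) d) \<le> 2 * d" using degree_monom_le[of "1::complex" d] by simp
  ultimately have dT: "degree T \<le> 2 * d" unfolding T_def using degree_diff_le by blast
  have Tx: "poly T x = x ^ d * complex_of_real (1 - (cmod (poly p x))\<^sup>2)" if x: "cmod x = 1" for x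
  proof -
    have "poly T x = x ^ d * (1 - poly p x * cnj (poly p x))"
      unfolding T_def using poly_cnj_reflect[OF dp x] by (simp add: poly_monom algebra_simps)
    then show ?thesis by (simp only: complex_norm_square of_real_diff of_real_1)
  qed
  have "circle_nonneg d T"
    unfolding circle_nonneg_def
  proof (intro allI impI)
    fix x :: complex assume x: "cmod x = 1"
    then have "(cmod (poly p x))\<^sup>2 \<le> 1" using bounded by (simp add: power_le_one)
    then show "0 \<le> poly T x / x ^ d" using x by (auto simp: Tx less_eq_complex_def)
  qed
  then obtain q where q: "degree q \<le> d" "T = q * cnj_reflect d q" using fejer_riesz[OF dT] by blast
  have "(cmod (poly p x))\<^sup>2 + (cmod (poly q x))\<^sup>2 = 1" if x: "cmod x = 1" for x
  proof -
    have "poly T x = x ^ d * (poly q x * cnj (poly q x))"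
      unfolding q(2) using poly_cnj_reflect[OF q(1) x] by simp
    then have "x ^ d * complex_of_real (1 - (cmod (poly p x))\<^sup>2) = x ^ d * complex_of_real ((cmod (poly q x))\<^sup>2)"
      unfolding Tx[OF x] by (simp only: complex_norm_square)
    then have "complex_of_real (1 - (cmod (poly p x))\<^sup>2) = complex_of_real ((cmod (poly q x))\<^sup>2)"
      using x by auto
    then show ?thesis by (simp only: of_real_eq_iff)
  qed
  then show ?thesis using q(1) by blast
qed

section \<open>Quantum signal processing\<close>

text \<open>A \<open>2 \<times> 2\<close> matrix is a function on the indices \<open>{0, 1}\<close>. \<open>qsp e [f\<^sub>1, \<dots>, f\<^sub>d] x\<close> is the
  product \<open>R(e) \<Phi>(x) R(f\<^sub>1) \<dots> \<Phi>(x) R(f\<^sub>d)\<close> of rotations \<open>R(a, b) = [[a, -conj b], [b, conj a]]\<close>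
  and phases \<open>\<Phi>(x) = diag(1, x)\<close>.\<close>

definition rot2 :: "complex \<times> complex \<Rightarrow> nat \<Rightarrow> nat \<Rightarrow> complex" where
  "rot2 e i j = (if i = 0 then (if j = 0 then fst e else - cnj (snd e))
                else (if j = 0 then snd e else cnj (fst e)))"

definition phase2 :: "complex \<Rightarrow> nat \<Rightarrow> nat \<Rightarrow> complex" where
  "phase2 x i j = (if i = j then (if i = 0 then 1 else x) else 0)"

definition mult2 :: "(nat \<Rightarrow> nat \<Rightarrow> complex) \<Rightarrow> (nat \<Rightarrow> nat \<Rightarrow> complex) \<Rightarrow> nat \<Rightarrow> nat \<Rightarrow> complex" where
  "mult2 A B i j = A i 0 * B 0 j + A i 1 * B 1 j"

fun qsp :: "complex \<times> complex \<Rightarrow> (complex \<times> complex) list \<Rightarrow> complex \<Rightarrow> nat \<Rightarrow> nat \<Rightarrow> complex" where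
  "qsp e [] x = rot2 e"
| "qsp e (f # fs) x = mult2 (mult2 (rot2 e) (phase2 x)) (qsp f fs x)"

definition unit_pair :: "complex \<times> complex \<Rightarrow> bool" where
  "unit_pair e \<longleftrightarrow> (cmod (fst e))\<^sup>2 + (cmod (snd e))\<^sup>2 = 1"

definition qsp_realizes :: "nat \<Rightarrow> complex poly \<Rightarrow> complex poly \<Rightarrow> bool" where
  "qsp_realizes d p q \<longleftrightarrow> (\<exists>e fs. length fs = d \<and> unit_pair e \<and> (\<forall>f\<in>set fs. unit_pair f) \<and>
      (\<forall>x. qsp e fs x 0 0 = poly p x \<and> qsp e fs x 1 0 = poly q x))"

lemma unit_pair_mult_cnj: "unit_pair (a, b) \<Longrightarrow> a * cnj a + b * cnj b = 1"
  unfolding unit_pair_def by (metis complex_norm_square fst_conv snd_conv of_real_add of_real_1)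

lemma rotation_norm_sq:
  "(cmod (cnj a * P + cnj b * Q))\<^sup>2 + (cmod (- b * P + a * Q))\<^sup>2
   = ((cmod a)\<^sup>2 + (cmod b)\<^sup>2) * ((cmod P)\<^sup>2 + (cmod Q)\<^sup>2)"
proof -
  have "complex_of_real ((cmod (cnj a * P + cnj b * Q))\<^sup>2 + (cmod (- b * P + a * Q))\<^sup>2)
      = complex_of_real (((cmod a)\<^sup>2 + (cmod b)\<^sup>2) * ((cmod P)\<^sup>2 + (cmod Q)\<^sup>2))"
    by (simp only: of_real_add of_real_mult complex_norm_square) (simp add: algebra_simps)
  then show ?thesis by (simp only: of_real_eq_iff)
qed

lemma qsp_realizes_Suc:
  assumes realizes: "qsp_realizes d p' t" and ab: "unit_pair (a, b)"
    and p': "p' = smult (cnj a) p + smult (cnj b) q"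
    and t: "pCons 0 t = smult (- b) p + smult a q"
  shows "qsp_realizes (Suc d) p q"
proof -
  obtain e fs where R: "length fs = d" "unit_pair e" "\<forall>f\<in>set fs. unit_pair f"
      "\<forall>x. qsp e fs x 0 0 = poly p' x \<and> qsp e fs x 1 0 = poly t x"
    using realizes unfolding qsp_realizes_def by blast
  have abc: "a * cnj a + b * cnj b = 1" by (rule unit_pair_mult_cnj[OF ab])
  have "qsp (a, b) (e # fs) x 0 0 = poly p x \<and> qsp (a, b) (e # fs) x 1 0 = poly q x" for x
  proof -
    have "x * poly t x = - b * poly p x + a * poly q x"
      using arg_cong[OF t, of "\<lambda>r. poly r x"] by simp
    moreover have "qsp (a, b) (e # fs) x i 0
        = rot2 (a, b) i 0 * qsp e fs x 0 0 + rot2 (a, b) i 1 * (x * qsp e fs x 1 0)" for i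
      by (simp add: mult2_def phase2_def)
    ultimately have col: "qsp (a, b) (e # fs) x i 0
        = rot2 (a, b) i 0 * (cnj a * poly p x + cnj b * poly q x)
          + rot2 (a, b) i 1 * (- b * poly p x + a * poly q x)" for i
      using R(4) p' by simp
    have "qsp (a, b) (e # fs) x 0 0 = (a * cnj a + b * cnj b) * poly p x"
      unfolding col by (simp add: rot2_def algebra_simps)
    moreover have "qsp (a, b) (e # fs) x 1 0 = (a * cnj a + b * cnj b) * poly q x"
      unfolding col by (simp add: rot2_def algebra_simps)
    ultimately show ?thesis using abc by simp
  qed
  then show ?thesis unfolding qsp_realizes_def using R ab
    by (intro exI[of _ "(a, b)"] exI[of _ "e # fs"]) auto
qed

text \<open>Compare the coefficients of \<open>x\<^sup>2\<^sup>n\<close> in \<open>p \<cdot> cnj_reflect n p + q \<cdot> cnj_reflect n q = x\<^sup>n\<close>,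
  which is \<open>|p|\<^sup>2 + |q|\<^sup>2 = 1\<close> on the unit circle.\<close>

lemma unit_circle_coeff_orthogonal:
  assumes dp: "degree p \<le> n" and dq: "degree q \<le> n" and n: "n > 0"
    and unit: "\<forall>x. cmod x = 1 \<longrightarrow> (cmod (poly p x))\<^sup>2 + (cmod (poly q x))\<^sup>2 = 1"
  shows "cnj (coeff p 0) * coeff p n + cnj (coeff q 0) * coeff q n = 0"
proof -
  have F: "p * cnj_reflect n p + q * cnj_reflect n q = monom 1 n"
  proof (rule poly_eqI_unit_circle)
    fix x :: complex assume x: "cmod x = 1"
    have "poly p x * cnj (poly p x) + poly q x * cnj (poly q x) = 1"
      using unit x by (simp only: complex_norm_square[symmetric] of_real_add[symmetric]) simp
    moreover have "poly (p * cnj_reflect n p + q * cnj_reflect n q) x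
        = x ^ n * (poly p x * cnj (poly p x) + poly q x * cnj (poly q x))"
      using poly_cnj_reflect[OF dp x] poly_cnj_reflect[OF dq x] by (simp add: algebra_simps)
    ultimately show "poly (p * cnj_reflect n p + q * cnj_reflect n q) x = poly (monom 1 n) x"
      by (simp add: poly_monom)
  qed
  have "coeff (p * cnj_reflect n p + q * cnj_reflect n q) (n + n)
      = coeff p n * cnj (coeff p 0) + coeff q n * cnj (coeff q 0)"
    using coeff_mult_degree_le_sum[OF dp degree_cnj_reflect_le] coeff_mult_degree_le_sum[OF dq degree_cnj_reflect_le]
      coeff_cnj_reflect[of n n p] coeff_cnj_reflect[of n n q]
    by simp
  moreover have "coeff (monom (1::complex) n) (n + n) = 0" using n by (simp add: coeff_monom)
  ultimately show ?thesis unfolding F by (simp add: mult.commute)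
qed

text \<open>Take \<open>(a, b)\<close> proportional to \<open>(P\<^sub>0, Q\<^sub>0)\<close>, or orthogonal to \<open>(P\<^sub>1, Q\<^sub>1)\<close> if \<open>P\<^sub>0 = Q\<^sub>0 = 0\<close>.\<close>

lemma unit_pair_orthogonal_exists:
  assumes "cnj P0 * P1 + cnj Q0 * Q1 = 0"
  shows "\<exists>a b. unit_pair (a, b) \<and> cnj a * P1 + cnj b * Q1 = 0 \<and> - b * P0 + a * Q0 = 0"
proof -
  obtain u1 u2 where u0: "(u1, u2) \<noteq> (0, 0)" and C1: "cnj u1 * P1 + cnj u2 * Q1 = 0"
      and C2: "- u2 * P0 + u1 * Q0 = 0"
  proof (cases "(P0, Q0) \<noteq> (0, 0)")
    case True
    show ?thesis by (rule that[of P0 Q0]) (use True assms in \<open>auto simp: algebra_simps\<close>)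
  next
    case P0Q0: False
    show ?thesis
    proof (cases "(P1, Q1) \<noteq> (0, 0)")
      case True
      show ?thesis by (rule that[of "- cnj Q1" "cnj P1"]) (use True P0Q0 in \<open>auto simp: algebra_simps\<close>)
    next
      case False
      show ?thesis by (rule that[of 1 0]) (use False P0Q0 in auto)
    qed
  qed
  define nu where "nu = sqrt ((cmod u1)\<^sup>2 + (cmod u2)\<^sup>2)"
  have pos: "(cmod u1)\<^sup>2 + (cmod u2)\<^sup>2 > 0" using u0 by (auto simp: sum_power2_gt_zero_iff)
  then have nu0: "nu > 0" unfolding nu_def by simp
  have "unit_pair (u1 / nu, u2 / nu)"
    unfolding unit_pair_def using pos nu0 u0
    by (simp add: nu_def norm_divide power_divide add_divide_distrib[symmetric])
  moreover have "cnj (u1 / nu) * P1 + cnj (u2 / nu) * Q1 = 0"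
    using C1 nu0 by (simp add: field_simps)
  moreover have "- (u2 / nu) * P0 + (u1 / nu) * Q0 = 0"
    using C2 nu0 by (simp add: field_simps)
  ultimately show ?thesis by blast
qed

theorem qsp_decomposition:
  "degree p \<le> d \<Longrightarrow> degree q \<le> d \<Longrightarrow>
   \<forall>x. cmod x = 1 \<longrightarrow> (cmod (poly p x))\<^sup>2 + (cmod (poly q x))\<^sup>2 = 1 \<Longrightarrow> qsp_realizes d p q"
proof (induction d arbitrary: p q)
  case 0
  then have P: "p = [:coeff p 0:]" and Q: "q = [:coeff q 0:]" using degree_0_id[symmetric] by auto
  have const: "poly p x = coeff p 0" "poly q x = coeff q 0" for x
    by (subst P, simp) (subst Q, simp)
  then have "unit_pair (coeff p 0, coeff q 0)"
    using "0.prems"(3) norm_one unfolding unit_pair_def by (metis fst_conv snd_conv)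
  then show ?case unfolding qsp_realizes_def
    by (intro exI[of _ "(coeff p 0, coeff q 0)"] exI[of _ "[]"]) (simp add: rot2_def const)
next
  case (Suc d p q)
  obtain a b where ab: "unit_pair (a, b)" and C1: "cnj a * coeff p (Suc d) + cnj b * coeff q (Suc d) = 0"
      and C2: "- b * coeff p 0 + a * coeff q 0 = 0"
    using unit_pair_orthogonal_exists unit_circle_coeff_orthogonal[OF Suc.prems(1,2) zero_less_Suc Suc.prems(3)] by blast
  define p' where "p' = smult (cnj a) p + smult (cnj b) q"
  define q' where "q' = smult (- b) p + smult a q"
  have "degree p' \<le> Suc d" "degree q' \<le> Suc d"
    unfolding p'_def q'_def using Suc.prems(1,2) by (meson degree_add_le degree_smult_le order.trans)+
  moreover have "coeff p' (Suc d) = 0" "coeff q' 0 = 0" unfolding p'_def q'_def using C1 C2 by simp_all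
  moreover obtain c t where "q' = pCons c t" by (rule pCons_cases)
  ultimately have dp': "degree p' \<le> d" and t: "q' = pCons 0 t" and dt: "degree t \<le> d"
    using degree_le_of_coeff_Suc_eq_0 by (auto split: if_splits)
  have "\<forall>x. cmod x = 1 \<longrightarrow> (cmod (poly p' x))\<^sup>2 + (cmod (poly t x))\<^sup>2 = 1"
  proof (intro allI impI)
    fix x :: complex assume x: "cmod x = 1"
    have "cmod (poly q' x) = cmod (poly t x)" using t x by (simp add: norm_mult)
    moreover have "(cmod (poly p' x))\<^sup>2 + (cmod (poly q' x))\<^sup>2 = 1"
      unfolding p'_def q'_def using rotation_norm_sq[of a "poly p x" b "poly q x"] ab Suc.prems(3) x
      unfolding unit_pair_def by simp
    ultimately show "(cmod (poly p' x))\<^sup>2 + (cmod (poly t x))\<^sup>2 = 1" by simp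
  qed
  then show ?case
    using qsp_realizes_Suc[OF Suc.IH[OF dp' dt] ab p'_def] t unfolding q'_def by simp
qed

section \<open>Qubit registers, gates and circuits\<close>

lemma qbit_eq_of_bit: "qbit r q = (if bit r q then 1 else 0)"
  unfolding qbit_def bit_iff_odd by (auto simp: odd_iff_mod_2_eq_one)

lemma qbit_le_1: "qbit r q \<le> 1"
  unfolding qbit_eq_of_bit by auto

lemma qbit_mod: "q < n \<Longrightarrow> qbit (r mod 2 ^ n) q = qbit r q"
  unfolding qbit_eq_of_bit by (simp add: take_bit_eq_mod[symmetric] bit_take_bit_iff)

lemma qbits_eq_iff_mod_eq: "(\<forall>q<n. qbit r q = qbit s q) \<longleftrightarrow> r mod 2 ^ n = s mod 2 ^ n"
proof
  assume "\<forall>q<n. qbit r q = qbit s q"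
  then have "\<forall>m. bit (take_bit n r) m = bit (take_bit n s) m"
    unfolding bit_take_bit_iff qbit_eq_of_bit by (metis one_neq_zero)
  then show "r mod 2 ^ n = s mod 2 ^ n" by (simp add: bit_eq_iff take_bit_eq_mod[symmetric])
next
  assume "r mod 2 ^ n = s mod 2 ^ n"
  then show "\<forall>q<n. qbit r q = qbit s q" using qbit_mod by metis
qed

lemma qbit_top: "r < 2 * 2 ^ n \<Longrightarrow> qbit r n = r div 2 ^ n"
  unfolding qbit_def by (simp add: div_less_iff_less_mult mult.commute)

lemma mod_eq_sum_qbits: "r mod 2 ^ n = (\<Sum>q<n. qbit r q * 2 ^ q)"
proof (induction n)
  case (Suc n)
  have "r mod 2 ^ Suc n = 2 ^ n * (r div 2 ^ n mod 2) + r mod 2 ^ n"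
    using mod_mult2_eq[of r "2 ^ n" 2] by (simp add: mult.commute)
  then show ?case using Suc by (simp add: qbit_def)
qed simp

lemma sum_binary_digits_less:
  assumes "\<And>t. f t \<le> (1::nat)"
  shows "(\<Sum>t<L. f t * 2 ^ t) < 2 ^ L"
proof (induction L)
  case (Suc L)
  have "f L * 2 ^ L \<le> 2 ^ L" using assms[of L] by simp
  with Suc.IH have "(\<Sum>t<L. f t * 2 ^ t) + f L * 2 ^ L < 2 ^ L + 2 ^ L" by (rule add_less_le_mono)
  then show ?case by simp
qed simp

lemma loc_index_less: "loc_index qs r < 2 ^ length qs"
  unfolding loc_index_def by (rule sum_binary_digits_less) (rule qbit_le_1)

lemma loc_index_mod: "set qs \<subseteq> {..<n} \<Longrightarrow> loc_index qs (r mod 2 ^ n) = loc_index qs r"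
  unfolding loc_index_def by (intro sum.cong refl) (metis lessThan_iff nth_mem qbit_mod subsetD)

lemma loc_index_single: "loc_index [a] r = qbit r a"
  unfolding loc_index_def by simp

lemma loc_index_pair: "loc_index [a, b] r = qbit r a + 2 * qbit r b"
  unfolding loc_index_def by (simp add: numeral_2_eq_2)

lemma index_mat_diag [simp]: "i < n \<Longrightarrow> j < n \<Longrightarrow> mat_diag n f $$ (i, j) = (if i = j then f i else 0)"
  unfolding mat_diag_def by simp

lemma dim_mat_diag [simp]: "dim_row (mat_diag n f) = n" "dim_col (mat_diag n f) = n"
  unfolding mat_diag_def by simp_all

lemma mat_diag_add:
  fixes f g :: "nat \<Rightarrow> 'a::monoid_add"
  shows "mat_diag n f + mat_diag n g = mat_diag n (\<lambda>i. f i + g i)"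
  by (rule eq_matI) auto

lemma mat_diag_smult:
  fixes f :: "nat \<Rightarrow> 'a::mult_zero"
  shows "c \<cdot>\<^sub>m mat_diag n f = mat_diag n (\<lambda>i. c * f i)"
  by (rule eq_matI) auto

lemma mat_diag_zero: "mat_diag n (\<lambda>i. 0) = 0\<^sub>m n n"
  by (rule eq_matI) auto

lemma mat_diag_pow:
  fixes f :: "nat \<Rightarrow> 'a::semiring_1"
  shows "mat_diag n f ^\<^sub>m k = mat_diag n (\<lambda>i. f i ^ k)"
  by (induction k) (simp_all add: power_commutes)

lemma adj_carrier [simp]: "A \<in> carrier_mat m k \<Longrightarrow> adj A \<in> carrier_mat k m"
  unfolding adj_def by auto

lemma adj_dim [simp]: "dim_row (adj A) = dim_col A" "dim_col (adj A) = dim_row A"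
  unfolding adj_def by auto

lemma adj_index [simp]: "i < dim_col A \<Longrightarrow> j < dim_row A \<Longrightarrow> adj A $$ (i, j) = cnj (A $$ (j, i))"
  unfolding adj_def by auto

lemma adj_adj [simp]: "adj (adj A) = A"
  by (rule eq_matI) auto

lemma adj_one [simp]: "adj (1\<^sub>m m) = 1\<^sub>m m"
  by (rule eq_matI) auto

lemma adj_mult:
  assumes "A \<in> carrier_mat m k" "B \<in> carrier_mat k l"
  shows "adj (A * B) = adj B * adj A"
proof (rule eq_matI)
  fix i j assume "i < dim_row (adj B * adj A)" "j < dim_col (adj B * adj A)"
  then have i: "i < l" and j: "j < m" using assms by auto
  have "adj (A * B) $$ (i, j) = cnj (\<Sum>t<k. A $$ (j, t) * B $$ (t, i))"
    using assms i j by (simp add: scalar_prod_def lessThan_atLeast0)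
  also have "\<dots> = (\<Sum>t<k. cnj (B $$ (t, i)) * cnj (A $$ (j, t)))"
    by (simp add: mult.commute)
  also have "\<dots> = (adj B * adj A) $$ (i, j)"
    using assms i j by (simp add: scalar_prod_def lessThan_atLeast0)
  finally show "adj (A * B) $$ (i, j) = (adj B * adj A) $$ (i, j)" .
qed (use assms in auto)

lemma is_unitary_adj: "is_unitary m G \<Longrightarrow> is_unitary m (adj G)"
  unfolding is_unitary_def by auto

lemma is_unitary_mat_diag:
  assumes "\<And>i. i < m \<Longrightarrow> cmod (f i) = 1"
  shows "is_unitary m (mat_diag m f)"
proof -
  have "adj (mat_diag m f) = mat_diag m (\<lambda>i. cnj (f i))" by (rule eq_matI) auto
  moreover have "mat_diag m (\<lambda>i. cnj (f i) * f i) = 1\<^sub>m m" "mat_diag m (\<lambda>i. f i * cnj (f i)) = 1\<^sub>m m"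
    using assms unit_circle_mult_cnj by (auto intro!: eq_matI simp: mult.commute)
  ultimately show ?thesis unfolding is_unitary_def by simp
qed

lemma index_four_block_mat_div_mod:
  assumes "A \<in> carrier_mat N N" "B \<in> carrier_mat N N" "C \<in> carrier_mat N N" "D \<in> carrier_mat N N"
    and i: "i < 2 * N" and j: "j < 2 * N"
  shows "four_block_mat A B C D $$ (i, j) =
    (if i div N = 0 then (if j div N = 0 then A else B) else (if j div N = 0 then C else D))
      $$ (i mod N, j mod N)"
proof -
  have "i < N \<longleftrightarrow> i div N = 0" "j < N \<longleftrightarrow> j div N = 0" using i j by (auto simp: div_eq_0_iff)
  moreover have "\<not> i < N \<Longrightarrow> i mod N = i - N" "\<not> j < N \<Longrightarrow> j mod N = j - N"
    using i j by (simp_all add: le_mod_geq)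
  ultimately show ?thesis using assms by auto
qed

lemma four_block_diag_mult_conj:
  assumes "P \<in> carrier_mat N N" "R \<in> carrier_mat N N"
    "A \<in> carrier_mat N N" "B \<in> carrier_mat N N" "C \<in> carrier_mat N N" "D \<in> carrier_mat N N"
  shows "four_block_mat P (0\<^sub>m N N) (0\<^sub>m N N) P * (four_block_mat A B C D * four_block_mat R (0\<^sub>m N N) (0\<^sub>m N N) R)
    = four_block_mat (P * (A * R)) (P * (B * R)) (P * (C * R)) (P * (D * R))"
proof -
  have "four_block_mat A B C D * four_block_mat R (0\<^sub>m N N) (0\<^sub>m N N) R
      = four_block_mat (A * R) (B * R) (C * R) (D * R)"
    by (subst mult_four_block_mat[of _ N N _ N _ N _ _ N _ N]) (use assms in simp_all)
  moreover have "four_block_mat P (0\<^sub>m N N) (0\<^sub>m N N) P * four_block_mat (A * R) (B * R) (C * R) (D * R)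
      = four_block_mat (P * (A * R)) (P * (B * R)) (P * (C * R)) (P * (D * R))"
    by (subst mult_four_block_mat[of _ N N _ N _ N _ _ N _ N]) (use assms in simp_all)
  ultimately show ?thesis by simp
qed

lemma top_left_block_four_block_mat:
  "A \<in> carrier_mat (2 ^ n) (2 ^ n) \<Longrightarrow> D \<in> carrier_mat (2 ^ n) (2 ^ n) \<Longrightarrow>
   top_left_block n (four_block_mat A B C D) A"
  unfolding top_left_block_def by simp

text \<open>\<open>anc_controlled N W\<close> applies the \<open>2 \<times> 2\<close> matrix \<open>W j\<close> to the ancilla (the top qubit)
  when the register below holds the basis state \<open>j\<close>.\<close>

definition anc_controlled :: "nat \<Rightarrow> (nat \<Rightarrow> nat \<Rightarrow> nat \<Rightarrow> complex) \<Rightarrow> complex mat" where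
  "anc_controlled N W = four_block_mat (mat_diag N (\<lambda>j. W j 0 0)) (mat_diag N (\<lambda>j. W j 0 1))
     (mat_diag N (\<lambda>j. W j 1 0)) (mat_diag N (\<lambda>j. W j 1 1))"

lemma anc_controlled_carrier [simp]: "anc_controlled N W \<in> carrier_mat (2 * N) (2 * N)"
  unfolding anc_controlled_def by (simp add: mult_2)

lemma anc_controlled_mult:
  "anc_controlled N W * anc_controlled N V = anc_controlled N (\<lambda>j. mult2 (W j) (V j))"
  unfolding anc_controlled_def mult2_def
  by (subst mult_four_block_mat[of _ N N _ N _ N _ _ N _ N]) (simp_all add: mat_diag_add)

lemma anc_controlled_index:
  assumes "i < 2 * N" "j < 2 * N"
  shows "anc_controlled N W $$ (i, j) = (if i mod N = j mod N then W (i mod N) (i div N) (j div N) else 0)"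
proof -
  have "i div N < 2" "j div N < 2" "0 < N" using assms by (auto simp: less_mult_imp_div_less)
  then have "i div N = 0 \<or> i div N = 1" "j div N = 0 \<or> j div N = 1" "i mod N < N" "j mod N < N"
    by auto
  then show ?thesis
    unfolding anc_controlled_def index_four_block_mat_div_mod[OF mat_diag_dim mat_diag_dim mat_diag_dim mat_diag_dim assms]
    by auto
qed

lemma embed_gate_carrier [simp]: "embed_gate m g \<in> carrier_mat (2 ^ m) (2 ^ m)"
  unfolding embed_gate_def by (cases g) simp

lemma embed_gate_dim [simp]: "dim_row (embed_gate m g) = 2 ^ m" "dim_col (embed_gate m g) = 2 ^ m"
  unfolding embed_gate_def by (cases g, simp)+

lemma embed_gate_index:
  "r < 2 ^ m \<Longrightarrow> s < 2 ^ m \<Longrightarrow> embed_gate m (qs, G) $$ (r, s) =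
    (if \<forall>q<m. q \<notin> set qs \<longrightarrow> qbit r q = qbit s q then G $$ (loc_index qs r, loc_index qs s) else 0)"
  unfolding embed_gate_def by simp

lemma valid_gate_Suc: "valid_gate n g \<Longrightarrow> valid_gate (Suc n) g"
  unfolding valid_gate_def by (cases g) auto

lemma embed_gate_Suc:
  assumes "valid_gate n (qs, G)"
  shows "embed_gate (Suc n) (qs, G) =
    four_block_mat (embed_gate n (qs, G)) (0\<^sub>m (2 ^ n) (2 ^ n)) (0\<^sub>m (2 ^ n) (2 ^ n)) (embed_gate n (qs, G))"
    (is "_ = ?B")
proof (rule eq_matI)
  let ?N = "2 ^ n :: nat"
  have qs: "set qs \<subseteq> {..<n}" using assms unfolding valid_gate_def by simp
  fix i j assume "i < dim_row ?B" "j < dim_col ?B"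
  then have i: "i < 2 * ?N" and j: "j < 2 * ?N" by simp_all
  have cond: "(\<forall>q<Suc n. q \<notin> set qs \<longrightarrow> qbit i q = qbit j q) \<longleftrightarrow>
        i div ?N = j div ?N \<and> (\<forall>q<n. q \<notin> set qs \<longrightarrow> qbit (i mod ?N) q = qbit (j mod ?N) q)"
    using qs qbit_top[OF i] qbit_top[OF j] qbit_mod[of _ n i] qbit_mod[of _ n j]
    by (auto simp: less_Suc_eq)
  have block: "?B $$ (i, j) = (if i div ?N = j div ?N then embed_gate n (qs, G) $$ (i mod ?N, j mod ?N) else 0)"
  proof -
    have "i div ?N < 2" "j div ?N < 2" "i mod ?N < ?N" "j mod ?N < ?N"
      using i j by (auto simp: less_mult_imp_div_less)
    then show ?thesis
      unfolding index_four_block_mat_div_mod[OF embed_gate_carrier zero_carrier_mat zero_carrier_mat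
          embed_gate_carrier i j]
      by (auto simp: less_2_cases_iff)
  qed
  show "embed_gate (Suc n) (qs, G) $$ (i, j) = ?B $$ (i, j)"
    unfolding block using i j loc_index_mod[OF qs] by (auto simp: embed_gate_index cond)
qed auto

lemma embed_gate_ancilla:
  "embed_gate (Suc n) ([n], mat 2 2 (\<lambda>(a, b). E a b)) = anc_controlled (2 ^ n) (\<lambda>j. E)"
proof (rule eq_matI)
  let ?N = "2 ^ n :: nat"
  fix i j assume "i < dim_row (anc_controlled ?N (\<lambda>j. E))" "j < dim_col (anc_controlled ?N (\<lambda>j. E))"
  then have i: "i < 2 * ?N" and j: "j < 2 * ?N" using anc_controlled_carrier[of ?N "\<lambda>j. E"] by auto
  have "(\<forall>q<Suc n. q \<noteq> n \<longrightarrow> qbit i q = qbit j q) \<longleftrightarrow> i mod ?N = j mod ?N"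
    using qbits_eq_iff_mod_eq[of n i j] by (auto simp: less_Suc_eq)
  moreover have "i div ?N < 2" "j div ?N < 2" using i j by (auto simp: less_mult_imp_div_less)
  ultimately show "embed_gate (Suc n) ([n], mat 2 2 (\<lambda>(a, b). E a b)) $$ (i, j)
      = anc_controlled ?N (\<lambda>j. E) $$ (i, j)"
    unfolding anc_controlled_index[OF i j] using i j
    by (simp add: embed_gate_index loc_index_single qbit_top)
qed (auto simp: anc_controlled_carrier[THEN carrier_matD(1)] anc_controlled_carrier[THEN carrier_matD(2)])

definition cphase :: "complex \<Rightarrow> complex mat" where
  "cphase ph = mat_diag 4 (\<lambda>a. if a = 3 then ph else 1)"

lemma embed_gate_cphase:
  assumes q: "q < n"
  shows "embed_gate (Suc n) ([q, n], cphase ph)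
    = mat_diag (2 ^ Suc n) (\<lambda>r. if qbit r q = 1 \<and> qbit r n = 1 then ph else 1)"
    (is "_ = ?D")
proof (rule eq_matI)
  fix i j assume "i < dim_row ?D" "j < dim_col ?D"
  then have i: "i < 2 ^ Suc n" and j: "j < 2 ^ Suc n" by simp_all
  have li: "loc_index [q, n] i < 4" "loc_index [q, n] j < 4"
    using loc_index_less[of "[q, n]"] by simp_all
  have b: "qbit i q \<le> 1" "qbit j q \<le> 1" "qbit i n \<le> 1" "qbit j n \<le> 1" by (rule qbit_le_1)+
  have eq_loc: "loc_index [q, n] i = loc_index [q, n] j \<longleftrightarrow> qbit i q = qbit j q \<and> qbit i n = qbit j n"
    unfolding loc_index_pair using b by presburger
  have three: "loc_index [q, n] i = 3 \<longleftrightarrow> qbit i q = 1 \<and> qbit i n = 1"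
    unfolding loc_index_pair using b by presburger
  have "(\<forall>q'<Suc n. qbit i q' = qbit j q') \<longleftrightarrow> i = j"
    using qbits_eq_iff_mod_eq[of "Suc n" i j] i j by simp
  then have "i \<noteq> j \<Longrightarrow> \<not> ((\<forall>q'<Suc n. q' \<notin> set [q, n] \<longrightarrow> qbit i q' = qbit j q') \<and>
       loc_index [q, n] i = loc_index [q, n] j)"
    using eq_loc q by auto
  then show "embed_gate (Suc n) ([q, n], cphase ph) $$ (i, j) = ?D $$ (i, j)"
    using i j li three by (cases "i = j") (auto simp: embed_gate_index cphase_def)
qed auto

lemma circuit_mat_carrier [simp]: "circuit_mat m gs \<in> carrier_mat (2 ^ m) (2 ^ m)"
  by (induction gs) (auto simp: circuit_mat_def)

lemma circuit_mat_dim [simp]: "dim_row (circuit_mat m gs) = 2 ^ m" "dim_col (circuit_mat m gs) = 2 ^ m"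
  using circuit_mat_carrier[of m gs] by (metis carrier_matD(1), metis carrier_matD(2))

lemma circuit_mat_Nil: "circuit_mat m [] = 1\<^sub>m (2 ^ m)"
  by (simp add: circuit_mat_def)

lemma circuit_mat_Cons: "circuit_mat m (g # gs) = embed_gate m g * circuit_mat m gs"
  by (simp add: circuit_mat_def)

lemma circuit_mat_single: "circuit_mat m [g] = embed_gate m g"
  by (simp add: circuit_mat_Cons circuit_mat_Nil)

lemma circuit_mat_append: "circuit_mat m (xs @ ys) = circuit_mat m xs * circuit_mat m ys"
proof (induction xs)
  case Nil
  then show ?case by (simp add: circuit_mat_Nil)
next
  case (Cons g xs)
  then show ?case
    by (simp add: circuit_mat_Cons assoc_mult_mat[OF embed_gate_carrier circuit_mat_carrier circuit_mat_carrier])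
qed

lemma circuit_mat_Suc:
  "\<forall>g\<in>set gs. valid_gate n g \<Longrightarrow> circuit_mat (Suc n) gs =
    four_block_mat (circuit_mat n gs) (0\<^sub>m (2 ^ n) (2 ^ n)) (0\<^sub>m (2 ^ n) (2 ^ n)) (circuit_mat n gs)"
proof (induction gs)
  case Nil
  then show ?case using four_block_one_mat[of "2 ^ n" "2 ^ n"] by (simp add: circuit_mat_Nil mult_2)
next
  case (Cons g gs)
  let ?N = "2 ^ n :: nat"
  obtain qs G where g: "g = (qs, G)" by (cases g)
  then have "circuit_mat (Suc n) (g # gs) =
     four_block_mat (embed_gate n g) (0\<^sub>m ?N ?N) (0\<^sub>m ?N ?N) (embed_gate n g) *
     four_block_mat (circuit_mat n gs) (0\<^sub>m ?N ?N) (0\<^sub>m ?N ?N) (circuit_mat n gs)"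
    using Cons embed_gate_Suc[of n qs G] by (simp add: circuit_mat_Cons)
  also have "\<dots> = four_block_mat (circuit_mat n (g # gs)) (0\<^sub>m ?N ?N) (0\<^sub>m ?N ?N) (circuit_mat n (g # gs))"
    by (subst mult_four_block_mat[of _ ?N ?N _ ?N _ ?N _ _ ?N _ ?N])
      (auto simp: circuit_mat_Cons mult_carrier_mat[OF embed_gate_carrier circuit_mat_carrier])
  finally show ?case .
qed

definition adj_gate :: "gate \<Rightarrow> gate" where
  "adj_gate g = (fst g, adj (snd g))"

lemma valid_gate_adj: "valid_gate n g \<Longrightarrow> valid_gate n (adj_gate g)"
  unfolding valid_gate_def adj_gate_def by (cases g) (auto simp: is_unitary_adj)

lemma embed_gate_adj:
  assumes "valid_gate n g"
  shows "embed_gate n (adj_gate g) = adj (embed_gate n g)"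
proof -
  obtain qs G where g: "g = (qs, G)" by (cases g)
  have G: "G \<in> carrier_mat (2 ^ length qs) (2 ^ length qs)"
    using assms g unfolding valid_gate_def is_unitary_def by simp
  show ?thesis
  proof (rule eq_matI)
    fix i j assume "i < dim_row (adj (embed_gate n g))" "j < dim_col (adj (embed_gate n g))"
    then have i: "i < 2 ^ n" and j: "j < 2 ^ n" by simp_all
    have "(\<forall>q<n. q \<notin> set qs \<longrightarrow> qbit i q = qbit j q) \<longleftrightarrow> (\<forall>q<n. q \<notin> set qs \<longrightarrow> qbit j q = qbit i q)"
      by auto
    then show "embed_gate n (adj_gate g) $$ (i, j) = adj (embed_gate n g) $$ (i, j)"
      unfolding g adj_gate_def using i j G loc_index_less[of qs i] loc_index_less[of qs j]
      by (auto simp: embed_gate_index)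
  qed simp_all
qed

lemma circuit_mat_rev_adj:
  "\<forall>g\<in>set gs. valid_gate n g \<Longrightarrow> circuit_mat n (rev (map adj_gate gs)) = adj (circuit_mat n gs)"
proof (induction gs)
  case (Cons g gs)
  then have "circuit_mat n (rev (map adj_gate (g # gs))) = adj (circuit_mat n gs) * embed_gate n (adj_gate g)"
    by (simp add: circuit_mat_append circuit_mat_single)
  also have "\<dots> = adj (circuit_mat n (g # gs))"
    using Cons.prems embed_gate_adj[of n g] adj_mult[OF embed_gate_carrier circuit_mat_carrier, of n g gs]
    by (simp add: circuit_mat_Cons)
  finally show ?case .
qed (simp add: circuit_mat_Nil)

lemma circuit_mat_cphases:
  "k \<le> n \<Longrightarrow> circuit_mat (Suc n) (map (\<lambda>q. ([q, n], cphase (x ^ 2 ^ q))) [0..<k]) =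
    mat_diag (2 ^ Suc n) (\<lambda>r. \<Prod>q<k. if qbit r q = 1 \<and> qbit r n = 1 then x ^ 2 ^ q else 1)"
proof (induction k)
  case 0
  show ?case by (simp only: mat_diag_one circuit_mat_Nil list.map upt_0 prod.empty lessThan_0)
next
  case (Suc k)
  have "circuit_mat (Suc n) (map (\<lambda>q. ([q, n], cphase (x ^ 2 ^ q))) [0..<Suc k]) =
     circuit_mat (Suc n) (map (\<lambda>q. ([q, n], cphase (x ^ 2 ^ q))) [0..<k]) *
     embed_gate (Suc n) ([k, n], cphase (x ^ 2 ^ k))"
    by (simp only: upt_Suc_append[OF le0] map_append list.map circuit_mat_append circuit_mat_single)
  also have "\<dots> = mat_diag (2 ^ Suc n) (\<lambda>r. \<Prod>q<Suc k. if qbit r q = 1 \<and> qbit r n = 1 then x ^ 2 ^ q else 1)"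
    using Suc by (simp add: embed_gate_cphase)
  finally show ?case .
qed

lemma prod_qbits_pow:
  "(\<Prod>q<n. if qbit r q = 1 \<and> b then x ^ 2 ^ q else 1) = (if b then x ^ (r mod 2 ^ n) else 1)"
proof (cases b)
  case True
  have "(\<Prod>q<n. if qbit r q = 1 then x ^ 2 ^ q else 1) = (\<Prod>q<n. x ^ (qbit r q * 2 ^ q))"
    by (rule prod.cong[OF refl]) (simp add: qbit_eq_of_bit)
  also have "\<dots> = x ^ (r mod 2 ^ n)" by (simp add: power_sum mod_eq_sum_qbits)
  finally show ?thesis using True by simp
qed simp

text \<open>Since \<open>j = \<Sum>\<^sub>q 2\<^sup>q j\<^sub>q\<close>, controlled phases \<open>x ^ 2 ^ q\<close> between each register qubit \<open>q\<close>
  and the ancilla multiply to \<open>diag(1, x\<^sup>j)\<close> on the ancilla in the register state \<open>j\<close>.\<close>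

definition phase_ladder :: "nat \<Rightarrow> complex \<Rightarrow> gate list" where
  "phase_ladder n x = map (\<lambda>q. ([q, n], cphase (x ^ 2 ^ q))) [0..<n]"

lemma circuit_mat_phase_ladder:
  "circuit_mat (Suc n) (phase_ladder n x) = anc_controlled (2 ^ n) (\<lambda>j. phase2 (x ^ j))"
proof (rule eq_matI)
  let ?N = "2 ^ n :: nat"
  fix i j assume "i < dim_row (anc_controlled ?N (\<lambda>j. phase2 (x ^ j)))"
    "j < dim_col (anc_controlled ?N (\<lambda>j. phase2 (x ^ j)))"
  then have i: "i < 2 * ?N" and j: "j < 2 * ?N"
    using anc_controlled_carrier[of ?N "\<lambda>j. phase2 (x ^ j)"] by auto
  have "i div ?N < 2" "j div ?N < 2" using i j by (auto simp: less_mult_imp_div_less)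
  moreover have "i = j \<longleftrightarrow> i mod ?N = j mod ?N \<and> i div ?N = j div ?N"
    by (metis div_mult_mod_eq)
  ultimately show "circuit_mat (Suc n) (phase_ladder n x) $$ (i, j) = anc_controlled ?N (\<lambda>j. phase2 (x ^ j)) $$ (i, j)"
    unfolding phase_ladder_def circuit_mat_cphases[OF order.refl] anc_controlled_index[OF i j] prod_qbits_pow
    using i j by (auto simp: qbit_top phase2_def less_2_cases_iff)
qed (auto simp: anc_controlled_carrier[THEN carrier_matD(1)] anc_controlled_carrier[THEN carrier_matD(2)] mult_2)

lemma valid_phase_ladder:
  assumes "cmod x = 1" and "g \<in> set (phase_ladder n x)"
  shows "valid_gate (Suc n) g"
proof -
  obtain q where q: "q < n" and g: "g = ([q, n], cphase (x ^ 2 ^ q))"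
    using assms(2) unfolding phase_ladder_def by auto
  have "is_unitary 4 (cphase (x ^ 2 ^ q))"
    unfolding cphase_def by (rule is_unitary_mat_diag) (simp add: norm_power assms(1))
  then show ?thesis unfolding g valid_gate_def using q by simp
qed

lemma is_unitary_rot2:
  assumes "unit_pair e"
  shows "is_unitary 2 (mat 2 2 (\<lambda>(a, b). rot2 e a b))"
proof -
  obtain a b where e: "e = (a, b)" by (cases e)
  have u: "a * cnj a + b * cnj b = 1" "cnj a * a + cnj b * b = 1"
    using unit_pair_mult_cnj assms e by (simp_all add: mult.commute)
  let ?M = "mat 2 2 (\<lambda>(i, j). rot2 e i j)"
  have sum2: "(\<Sum>k\<in>{0..<2}. f k) = f 0 + f 1" for f :: "nat \<Rightarrow> complex" by (simp add: numeral_2_eq_2)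
  have "adj ?M * ?M = 1\<^sub>m 2" "?M * adj ?M = 1\<^sub>m 2"
    by (auto intro!: eq_matI simp: less_2_cases_iff scalar_prod_def sum2 rot2_def e u algebra_simps)
  then show ?thesis unfolding is_unitary_def by simp
qed

definition ancilla_gate :: "nat \<Rightarrow> complex \<times> complex \<Rightarrow> gate" where
  "ancilla_gate n e = ([n], mat 2 2 (\<lambda>(a, b). rot2 e a b))"

fun qsp_circuit :: "nat \<Rightarrow> complex \<Rightarrow> complex \<times> complex \<Rightarrow> (complex \<times> complex) list \<Rightarrow> gate list" where
  "qsp_circuit n x e [] = [ancilla_gate n e]"
| "qsp_circuit n x e (f # fs) = ancilla_gate n e # phase_ladder n x @ qsp_circuit n x f fs"

lemma valid_ancilla_gate: "unit_pair e \<Longrightarrow> valid_gate (Suc n) (ancilla_gate n e)"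
  unfolding valid_gate_def ancilla_gate_def using is_unitary_rot2 by simp

lemma valid_qsp_circuit:
  "cmod x = 1 \<Longrightarrow> unit_pair e \<Longrightarrow> \<forall>f\<in>set fs. unit_pair f \<Longrightarrow> \<forall>g\<in>set (qsp_circuit n x e fs). valid_gate (Suc n) g"
  by (induction fs arbitrary: e) (auto simp: valid_ancilla_gate dest: valid_phase_ladder)

lemma length_qsp_circuit: "length (qsp_circuit n x e fs) = Suc (length fs) + length fs * n"
  by (induction fs arbitrary: e) (auto simp: phase_ladder_def)

lemma circuit_mat_qsp_circuit:
  "circuit_mat (Suc n) (qsp_circuit n x e fs) = anc_controlled (2 ^ n) (\<lambda>j. qsp e fs (x ^ j))"
proof (induction fs arbitrary: e)
  case Nil
  show ?case by (simp add: circuit_mat_single ancilla_gate_def embed_gate_ancilla)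
next
  case (Cons f fs)
  let ?N = "2 ^ n :: nat"
  have "circuit_mat (Suc n) (qsp_circuit n x e (f # fs)) =
      anc_controlled ?N (\<lambda>j. rot2 e) * (anc_controlled ?N (\<lambda>j. phase2 (x ^ j)) * anc_controlled ?N (\<lambda>j. qsp f fs (x ^ j)))"
    by (simp add: circuit_mat_Cons circuit_mat_append ancilla_gate_def embed_gate_ancilla
        circuit_mat_phase_ladder Cons.IH)
  also have "\<dots> = anc_controlled ?N (\<lambda>j. rot2 e) * anc_controlled ?N (\<lambda>j. phase2 (x ^ j)) * anc_controlled ?N (\<lambda>j. qsp f fs (x ^ j))"
    by (rule assoc_mult_mat[symmetric]) (rule anc_controlled_carrier)+
  also have "\<dots> = anc_controlled ?N (\<lambda>j. qsp e (f # fs) (x ^ j))"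
    by (simp add: anc_controlled_mult)
  finally show ?case .
qed

section \<open>Block encoding\<close>

lemma pow_mat_unitary_conj:
  assumes Q: "is_unitary N Q" and A: "A \<in> carrier_mat N N"
  shows "(adj Q * A * Q) ^\<^sub>m k = adj Q * (A ^\<^sub>m k) * Q"
proof (induction k)
  case 0
  have "Q \<in> carrier_mat N N" "adj Q * Q = 1\<^sub>m N" using Q unfolding is_unitary_def by auto
  then show ?case using A by simp
next
  case (Suc k)
  have QN: "Q \<in> carrier_mat N N" and QQ: "Q * adj Q = 1\<^sub>m N" using Q unfolding is_unitary_def by auto
  have cancel: "Q * (adj Q * B) = B" if "B \<in> carrier_mat N N" for B
    using QN QQ that by (simp flip: assoc_mult_mat[of Q N N "adj Q" N B N])
  have "(adj Q * A * Q) ^\<^sub>m Suc k = adj Q * (A ^\<^sub>m k) * Q * (adj Q * A * Q)" using Suc by simp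
  also have "\<dots> = adj Q * (A ^\<^sub>m k * A) * Q"
    using QN A cancel by (simp add: assoc_mult_mat[of _ N N _ N _ N] mult_carrier_mat[of _ N N _ N])
  finally show ?case by simp
qed

lemma mat_poly_unitary_conj:
  assumes Q: "is_unitary N Q" and A: "A \<in> carrier_mat N N"
  shows "mat_poly N alpha d (adj Q * A * Q) = adj Q * mat_poly N alpha d A * Q"
proof -
  have QN: "Q \<in> carrier_mat N N" using Q unfolding is_unitary_def by simp
  have "foldr (\<lambda>k M. alpha k \<cdot>\<^sub>m ((adj Q * A * Q) ^\<^sub>m k) + M) ks (0\<^sub>m N N) =
     adj Q * foldr (\<lambda>k M. alpha k \<cdot>\<^sub>m (A ^\<^sub>m k) + M) ks (0\<^sub>m N N) * Q" for ks
  proof (induction ks)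
    case Nil
    then show ?case using QN by simp
  next
    case (Cons k ks)
    define R where "R = foldr (\<lambda>k M. alpha k \<cdot>\<^sub>m (A ^\<^sub>m k) + M) ks (0\<^sub>m N N)"
    have R: "R \<in> carrier_mat N N" unfolding R_def by (induction ks) (use A in auto)
    have "foldr (\<lambda>k M. alpha k \<cdot>\<^sub>m ((adj Q * A * Q) ^\<^sub>m k) + M) (k # ks) (0\<^sub>m N N)
        = alpha k \<cdot>\<^sub>m (adj Q * A ^\<^sub>m k * Q) + adj Q * R * Q"
      using Cons.IH pow_mat_unitary_conj[OF Q A] unfolding R_def by simp
    also have "\<dots> = adj Q * (alpha k \<cdot>\<^sub>m A ^\<^sub>m k + R) * Q"
      using QN A R
      by (simp add: add_mult_distrib_mat[of _ N N _ _ N] mult_add_distrib_mat[of _ N N _ N]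
          mult_smult_distrib[of _ N N _ N] mult_smult_assoc_mat[of _ N N _ N] mult_carrier_mat[of _ N N _ N])
    finally show ?case unfolding R_def by simp
  qed
  then show ?thesis unfolding mat_poly_def .
qed

lemma mat_poly_mat_diag:
  "mat_poly N alpha d (mat_diag N f) = mat_diag N (\<lambda>j. \<Sum>k\<le>d. alpha k * f j ^ k)"
proof -
  have "foldr (\<lambda>k M. alpha k \<cdot>\<^sub>m (mat_diag N f ^\<^sub>m k) + M) ks (0\<^sub>m N N)
      = mat_diag N (\<lambda>j. \<Sum>k\<leftarrow>ks. alpha k * f j ^ k)" for ks
    by (induction ks) (simp_all add: mat_diag_zero mat_diag_pow mat_diag_smult mat_diag_add)
  moreover have "(\<Sum>k\<leftarrow>[0..<Suc d]. alpha k * f j ^ k) = (\<Sum>k\<le>d. alpha k * f j ^ k)" for j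
    by (simp only: sum_set_upt_conv_sum_list_nat[symmetric] set_upt atLeast0LessThan lessThan_Suc_atMost)
  ultimately show ?thesis unfolding mat_poly_def by simp
qed

lemma U_omega_eq_mat_diag: "U_omega N = mat_diag N (\<lambda>j. omega N ^ j)"
  unfolding U_omega_def mat_diag_def by (rule eq_matI) auto

lemma U_omega_carrier: "U_omega N \<in> carrier_mat N N"
  unfolding U_omega_eq_mat_diag by simp

lemma qsp_block_encoding:
  assumes impl: "implements n gsQ Q" and x: "cmod x = 1"
    and deg: "degree p \<le> d" and bounded: "\<And>y. cmod y = 1 \<Longrightarrow> cmod (poly p y) \<le> 1"
  shows "\<exists>gs V. implements (Suc n) gs V \<and>
     top_left_block n V (adj Q * mat_diag (2 ^ n) (\<lambda>j. poly p (x ^ j)) * Q) \<and>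
     length gs = 2 * length gsQ + Suc d + d * n"
proof -
  let ?N = "2 ^ n :: nat"
  let ?Z = "0\<^sub>m ?N ?N :: complex mat"
  obtain q where "degree q \<le> d" "\<forall>y. cmod y = 1 \<longrightarrow> (cmod (poly p y))\<^sup>2 + (cmod (poly q y))\<^sup>2 = 1"
    using complementary_poly_exists[OF deg bounded] by blast
  then obtain e fs where fs: "length fs = d" "unit_pair e" "\<forall>f\<in>set fs. unit_pair f"
    and col: "\<forall>y. qsp e fs y 0 0 = poly p y"
    using qsp_decomposition[OF deg] unfolding qsp_realizes_def by blast
  have valid: "\<forall>g\<in>set gsQ. valid_gate n g" and Q: "circuit_mat n gsQ = Q"
    using impl unfolding implements_def by auto
  have QN: "Q \<in> carrier_mat ?N ?N" using Q circuit_mat_carrier by metis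
  define W where "W j = qsp e fs (x ^ j)" for j
  define gs where "gs = rev (map adj_gate gsQ) @ qsp_circuit n x e fs @ gsQ"
  have valid_gs: "\<forall>g\<in>set gs. valid_gate (Suc n) g"
    unfolding gs_def using valid valid_gate_adj valid_gate_Suc valid_qsp_circuit[OF x fs(2,3)] by auto
  have length_gs: "length gs = 2 * length gsQ + Suc d + d * n"
    unfolding gs_def using fs(1) by (simp add: length_qsp_circuit)
  have "circuit_mat (Suc n) gs
      = four_block_mat (adj Q) ?Z ?Z (adj Q) * (anc_controlled ?N W * four_block_mat Q ?Z ?Z Q)"
    using valid valid_gate_adj QN unfolding gs_def circuit_mat_append W_def
    by (simp add: circuit_mat_Suc circuit_mat_rev_adj circuit_mat_qsp_circuit Q mult_2)
  also have "\<dots> = four_block_mat (adj Q * (mat_diag ?N (\<lambda>j. poly p (x ^ j)) * Q))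
      (adj Q * (mat_diag ?N (\<lambda>j. W j 0 1) * Q)) (adj Q * (mat_diag ?N (\<lambda>j. W j 1 0) * Q))
      (adj Q * (mat_diag ?N (\<lambda>j. W j 1 1) * Q))"
    unfolding anc_controlled_def W_def col[rule_format] by (rule four_block_diag_mult_conj) (use QN in auto)
  finally have "top_left_block n (circuit_mat (Suc n) gs) (adj Q * (mat_diag ?N (\<lambda>j. poly p (x ^ j)) * Q))"
    using QN by (simp add: top_left_block_four_block_mat mult_carrier_mat[of _ ?N ?N _ ?N])
  moreover have "adj Q * (mat_diag ?N (\<lambda>j. poly p (x ^ j)) * Q) = adj Q * mat_diag ?N (\<lambda>j. poly p (x ^ j)) * Q"
    using QN by (simp add: assoc_mult_mat[of _ ?N ?N _ ?N _ ?N])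
  ultimately show ?thesis using valid_gs length_gs unfolding implements_def by auto
qed

lemma mat_poly_U_omega_conj:
  assumes "is_unitary N Q"
  shows "mat_poly N alpha d (adj Q * U_omega N * Q)
    = adj Q * mat_diag N (\<lambda>j. \<Sum>k\<le>d. alpha k * (omega N ^ j) ^ k) * Q"
  unfolding mat_poly_unitary_conj[OF assms U_omega_carrier] by (simp only: U_omega_eq_mat_diag mat_poly_mat_diag)

lemma poly_sum_monom:
  fixes alpha :: "nat \<Rightarrow> 'a::comm_semiring_1"
  shows "poly (\<Sum>k\<le>d. monom (alpha k) k) x = (\<Sum>k\<le>d. alpha k * x ^ k)"
  by (simp add: poly_sum poly_monom)

lemma degree_sum_monom_le: "degree (\<Sum>k\<le>d. monom (alpha k) k) \<le> d"
  by (rule degree_sum_le) (auto intro: order.trans[OF degree_monom_le])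

lemma circle_bound_pos:
  assumes lead: "alpha d \<noteq> 0" and bound: "\<forall>x. cmod x = 1 \<longrightarrow> (cmod (\<Sum>k\<le>d. alpha k * x ^ k))\<^sup>2 \<le> c"
  shows "c > 0"
proof (rule ccontr)
  assume "\<not> c > 0"
  define P where "P = (\<Sum>k\<le>d. monom (alpha k) k)"
  have "poly P x = poly 0 x" if "cmod x = 1" for x
  proof -
    have "(cmod (poly P x))\<^sup>2 \<le> c" using bound that by (simp add: P_def poly_sum_monom)
    then have "(cmod (poly P x))\<^sup>2 \<le> 0" using \<open>\<not> c > 0\<close> by linarith
    then show ?thesis by simp
  qed
  then have "P = 0" by (rule poly_eqI_unit_circle)
  moreover have "coeff P d = alpha d" unfolding P_def by (simp add: coeff_sum coeff_monom)
  ultimately show False using lead by simp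
qed

lemma mat_poly_block_encoding:
  assumes impl: "implements n gsQ Q" and unitary: "is_unitary (2 ^ n) Q" and lead: "alpha d \<noteq> 0"
    and bound: "\<forall>x. cmod x = 1 \<longrightarrow> (cmod (\<Sum>k\<le>d. alpha k * x ^ k))\<^sup>2 \<le> c"
  shows "\<exists>gs V. implements (Suc n) gs V \<and>
     top_left_block n V ((1 / complex_of_real (sqrt c)) \<cdot>\<^sub>m mat_poly (2 ^ n) alpha d (adj Q * U_omega (2 ^ n) * Q)) \<and>
     length gs = 2 * length gsQ + Suc d + d * n"
proof -
  let ?N = "2 ^ n :: nat"
  let ?s = "1 / complex_of_real (sqrt c)"
  have "c > 0" by (rule circle_bound_pos[OF lead bound])
  define p where "p = smult ?s (\<Sum>k\<le>d. monom (alpha k) k)"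
  have poly_p: "poly p x = ?s * (\<Sum>k\<le>d. alpha k * x ^ k)" for x
    unfolding p_def by (simp add: poly_sum_monom)
  have "degree p \<le> d" unfolding p_def using degree_sum_monom_le degree_smult_le order.trans by blast
  moreover have "cmod (poly p x) \<le> 1" if "cmod x = 1" for x
  proof -
    have "cmod (\<Sum>k\<le>d. alpha k * x ^ k) \<le> sqrt c" using bound that by (simp add: real_le_rsqrt)
    then show ?thesis unfolding poly_p using \<open>c > 0\<close> by (simp add: norm_divide)
  qed
  moreover have "cmod (omega ?N) = 1" unfolding omega_def by simp
  ultimately obtain gs V where "implements (Suc n) gs V"
      "top_left_block n V (adj Q * mat_diag ?N (\<lambda>j. poly p (omega ?N ^ j)) * Q)"
      "length gs = 2 * length gsQ + Suc d + d * n"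
    using qsp_block_encoding[OF impl] by blast
  moreover have "?s \<cdot>\<^sub>m mat_poly ?N alpha d (adj Q * U_omega ?N * Q)
      = adj Q * mat_diag ?N (\<lambda>j. poly p (omega ?N ^ j)) * Q"
  proof -
    have "mat_diag ?N (\<lambda>j. poly p (omega ?N ^ j))
        = ?s \<cdot>\<^sub>m mat_diag ?N (\<lambda>j. \<Sum>k\<le>d. alpha k * (omega ?N ^ j) ^ k)"
      by (simp only: poly_p mat_diag_smult)
    then show ?thesis
      using unitary unfolding mat_poly_U_omega_conj[OF unitary] is_unitary_def
      by (simp add: mult_smult_distrib[of _ ?N ?N _ ?N] mult_smult_assoc_mat[of _ ?N ?N _ ?N]
          mult_carrier_mat[of _ ?N ?N _ ?N])
  qed
  ultimately show ?thesis by auto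
qed

lemma gate_count_le:
  fixes K :: real
  assumes "real L \<le> K * real \<chi>" "1 \<le> n"
  shows "real (2 * L + Suc d + d * n) \<le> (2 * max K 0 + 2) * (real d * log 2 (real (2 ^ n)) + real \<chi> + 1)"
proof -
  define K' where "K' = max K 0"
  have "real L \<le> K' * real \<chi>"
    using assms(1) unfolding K'_def by (meson max.cobounded1 mult_right_mono of_nat_0_le_iff order.trans)
  moreover have "real d \<le> real d * real n" using assms(2) mult_left_mono[of 1 "real n" "real d"] by simp
  moreover have "0 \<le> K' * (real d * real n)" "0 \<le> K' * real \<chi>" "0 \<le> K'" unfolding K'_def by simp_all
  moreover have "(2 * K' + 2) * (real d * real n + real \<chi> + 1) =
      2 * K' * (real d * real n) + 2 * K' * real \<chi> + 2 * K' + 2 * (real d * real n) + 2 * real \<chi> + 2"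
    by (simp add: algebra_simps)
  moreover have count: "real (2 * L + Suc d + d * n) = 2 * real L + real d + 1 + real d * real n"
    and log: "log 2 (real (2 ^ n)) = real n" by simp_all
  ultimately show ?thesis unfolding K'_def[symmetric] count log by linarith
qed

theorem theorem11:
  fixes K :: real
  shows "\<exists>C :: real. \<forall>(n :: nat) (lam :: nat \<Rightarrow> complex vec) (Q :: complex mat)
      (gsQ :: gate list) (\<chi> :: nat) (alpha :: nat \<Rightarrow> complex) (d :: nat) (c :: real).
     n \<ge> 1 \<longrightarrow>
     orthonormal_basis (2 ^ n) lam \<longrightarrow>
     is_unitary (2 ^ n) Q \<longrightarrow>
     U_omega_lambda (2 ^ n) lam = adj Q * U_omega (2 ^ n) * Q \<longrightarrow>
     implements n gsQ Q \<longrightarrow> real (length gsQ) \<le> K * real \<chi> \<longrightarrow>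
     alpha d \<noteq> 0 \<longrightarrow>
     (\<forall>x :: complex. cmod x = 1 \<longrightarrow> (cmod (\<Sum>k\<le>d. alpha k * x ^ k))\<^sup>2 \<le> c) \<longrightarrow>
     (\<exists>gs :: gate list. \<exists>V :: complex mat.
        implements (n + 1) gs V \<and>
        top_left_block n V ((1 / complex_of_real (sqrt c)) \<cdot>\<^sub>m
                              mat_poly (2 ^ n) alpha d (U_omega_lambda (2 ^ n) lam)) \<and>
        real (length gs) \<le> C * (real d * log 2 (real (2 ^ n)) + real \<chi> + 1))"
proof (intro exI[of _ "2 * max K 0 + 2"] allI impI)
  fix n lam Q gsQ \<chi> alpha d c
  assume n: "1 \<le> n" and "orthonormal_basis (2 ^ n) lam" and unitary: "is_unitary (2 ^ n) Q"
    and diagonalizes: "U_omega_lambda (2 ^ n) lam = adj Q * U_omega (2 ^ n) * Q"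
    and impl: "implements n gsQ Q" and length_gsQ: "real (length gsQ) \<le> K * real \<chi>"
    and lead: "alpha d \<noteq> 0" and bound: "\<forall>x. cmod x = 1 \<longrightarrow> (cmod (\<Sum>k\<le>d. alpha k * x ^ k))\<^sup>2 \<le> c"
  obtain gs V where "implements (Suc n) gs V"
    and "top_left_block n V ((1 / complex_of_real (sqrt c)) \<cdot>\<^sub>m mat_poly (2 ^ n) alpha d (adj Q * U_omega (2 ^ n) * Q))"
    and length_gs: "length gs = 2 * length gsQ + Suc d + d * n"
    using mat_poly_block_encoding[OF impl unitary lead bound] by blast
  moreover have "real (length gs) \<le> (2 * max K 0 + 2) * (real d * log 2 (real (2 ^ n)) + real \<chi> + 1)"
    unfolding length_gs by (rule gate_count_le[OF length_gsQ n])
  ultimately show "\<exists>gs V. implements (n + 1) gs V \<and>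
      top_left_block n V ((1 / complex_of_real (sqrt c)) \<cdot>\<^sub>m mat_poly (2 ^ n) alpha d (U_omega_lambda (2 ^ n) lam)) \<and>
      real (length gs) \<le> (2 * max K 0 + 2) * (real d * log 2 (real (2 ^ n)) + real \<chi> + 1)"
    unfolding diagonalizes Suc_eq_plus1[symmetric] by blast
qed

end
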